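(* Let $G^c$ be a vertex-coloured graph with $n$ vertices, $m$ edges and $c$ colours, and let $k>0$ be an integer. If $m\ge \binom{n-k+c-1}{2}+n-k$ and $n>k+c-2$, then $\gamma^t(G^c)\le k$. Furthermore (for $k\ge c$), there exist vertex-coloured graphs with $n$ vertices, $c$ colours, exactly $\binom{n-k+c-1}{2}+n-k$ edges and $\gamma^t=k$.
   Context: A vertex-coloured graph $G^c$ with colour set $\{1,\dots,c\}$ is a finite simple graph in which every vertex receives exactly one colour and every colour appears on at least one vertex. A dominating set is tropical if every colour appears on at least one of its vertices; $\gamma^t(G^c)$ is the minimum size of a tropical dominating set. *)

theory Defs
  imports Main
begin

definition simple_graph :: "'a set \<Rightarrow> ('a \<Rightarrow> 'a \<Rightarrow> bool) \<Rightarrow> bool" where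
  "simple_graph V E \<longleftrightarrow> finite V \<and> (\<forall>u v. E u v \<longrightarrow> u \<in> V \<and> v \<in> V)
     \<and> (\<forall>u v. E u v \<longrightarrow> E v u) \<and> (\<forall>v. \<not> E v v)"

definition edges :: "'a set \<Rightarrow> ('a \<Rightarrow> 'a \<Rightarrow> bool) \<Rightarrow> 'a set set" where
  "edges V E = {{u, v} | u v. u \<in> V \<and> v \<in> V \<and> E u v}"

definition num_edges :: "'a set \<Rightarrow> ('a \<Rightarrow> 'a \<Rightarrow> bool) \<Rightarrow> nat" where
  "num_edges V E = card (edges V E)"

definition vertex_coloured :: "'a set \<Rightarrow> ('a \<Rightarrow> nat) \<Rightarrow> nat \<Rightarrow> bool" where
  "vertex_coloured V col c \<longleftrightarrow> col ` V = {1..c}"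

definition dominating :: "'a set \<Rightarrow> ('a \<Rightarrow> 'a \<Rightarrow> bool) \<Rightarrow> 'a set \<Rightarrow> bool" where
  "dominating V E D \<longleftrightarrow> D \<subseteq> V \<and> (\<forall>v\<in>V. v \<in> D \<or> (\<exists>u\<in>D. E u v))"

definition tropical :: "('a \<Rightarrow> nat) \<Rightarrow> nat \<Rightarrow> 'a set \<Rightarrow> bool" where
  "tropical col c D \<longleftrightarrow> {1..c} \<subseteq> col ` D"

definition trop_dom_number :: "'a set \<Rightarrow> ('a \<Rightarrow> 'a \<Rightarrow> bool) \<Rightarrow> ('a \<Rightarrow> nat) \<Rightarrow> nat \<Rightarrow> nat" where
  "trop_dom_number V E col c = Min {card D | D. dominating V E D \<and> tropical col c D}"

end

theory Submission
  imports Defs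
begin

text \<open>
  If every tropical dominating set had more than \<open>k\<close> vertices, then, since any dominating
  set becomes tropical after adding one vertex for each of at most \<open>c - 1\<close> missing colours,
  every dominating set would have at least \<open>g = k + 2 - c\<close> vertices. Vizing's bound
  \<open>2m \<le> (n - g)(n - g + 2)\<close> for graphs of domination number at least \<open>g\<close> then contradicts
  the assumed number of edges (for \<open>k < c\<close> that number already exceeds \<open>n choose 2\<close>).
  Vizing's bound is proved by induction on \<open>g\<close>: remove the closed neighbourhood of a vertex of
  maximum degree; the rest still needs \<open>g - 1\<close> dominating vertices, and each neighbour
  of the removed vertex has few neighbours in the rest, since together with that vertex it would
  otherwise dominate too cheaply.
\<close>

definition nbhd :: "'a set \<Rightarrow> ('a \<Rightarrow> 'a \<Rightarrow> bool) \<Rightarrow> 'a \<Rightarrow> 'a set" where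
  "nbhd W E v = {u \<in> W. E v u}"

definition degree_in :: "'a set \<Rightarrow> ('a \<Rightarrow> 'a \<Rightarrow> bool) \<Rightarrow> 'a \<Rightarrow> nat" where
  "degree_in W E v = card (nbhd W E v)"

lemma simple_graphD:
  assumes "simple_graph V E"
  shows "finite V" "symp E" "irreflp E"
  using assms unfolding simple_graph_def symp_def irreflp_def by auto

lemma finite_edges:
  assumes "finite V"
  shows "finite (edges V E)"
proof -
  have "edges V E \<subseteq> Pow V" unfolding edges_def by auto
  then show ?thesis using assms by (meson finite_Pow_iff rev_finite_subset)
qed

lemma two_num_edges_eq_degree_sum:
  assumes "simple_graph V E"
  shows "2 * num_edges V E = (\<Sum>v\<in>V. degree_in V E v)"
proof -
  have fin: "finite V" and sym: "symp E" and irr: "irreflp E"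
    using simple_graphD[OF assms] by auto
  define A where "A = (SIGMA v:V. nbhd V E v)"
  define F where "F e = {p\<in>A. {fst p, snd p} = e}" for e
  have A_eq: "A = (\<Union>e\<in>edges V E. F e)"
    unfolding A_def F_def edges_def nbhd_def by (auto; blast)
  have card_F: "card (F e) = 2" if e_edge: "e \<in> edges V E" for e
  proof -
    obtain u v where e: "e = {u,v}" "u \<in> V" "v \<in> V" "E u v"
      using e_edge unfolding edges_def by auto
    have "u \<noteq> v" using e irr by (auto dest: irreflpD)
    have "F e = {(u,v),(v,u)}"
      unfolding F_def A_def nbhd_def using e sym by (auto simp: doubleton_eq_iff dest: sympD)
    then show ?thesis using \<open>u \<noteq> v\<close> by simp
  qed
  have "card A = (\<Sum>e\<in>edges V E. card (F e))"
    unfolding A_eq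
  proof (rule card_UN_disjoint[OF finite_edges[OF fin]])
    show "\<forall>e\<in>edges V E. finite (F e)" using card_F by (metis card.infinite zero_neq_numeral)
    show "\<forall>e\<in>edges V E. \<forall>e'\<in>edges V E. e \<noteq> e' \<longrightarrow> F e \<inter> F e' = {}"
      unfolding F_def by auto
  qed
  also have "\<dots> = 2 * num_edges V E" using card_F by (simp add: num_edges_def)
  finally show ?thesis
    unfolding A_def degree_in_def using fin by (simp add: nbhd_def)
qed

lemma num_edges_le_choose_two:
  assumes "simple_graph V E"
  shows "num_edges V E \<le> card V choose 2"
proof -
  have fin: "finite V" using simple_graphD[OF assms] by simp
  have "edges V E \<subseteq> {B. B \<subseteq> V \<and> card B = 2}"
    using assms unfolding edges_def simple_graph_def by auto (metis card_2_iff)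
  then have "num_edges V E \<le> card {B. B \<subseteq> V \<and> card B = 2}"
    unfolding num_edges_def using fin by (intro card_mono) auto
  then show ?thesis using n_subsets[OF fin] by simp
qed

lemma degree_sum_swap:
  assumes "symp E" and "finite A" and "finite B"
  shows "(\<Sum>a\<in>A. degree_in B E a) = (\<Sum>b\<in>B. degree_in A E b)"
proof -
  have E_comm: "E a b = E b a" for a b using assms(1) by (blast dest: sympD)
  have "(\<Sum>a\<in>A. degree_in B E a) = (\<Sum>a\<in>A. \<Sum>b\<in>B. if E a b then 1 else 0)"
    using assms by (simp add: degree_in_def nbhd_def sum.If_cases Int_def)
  also have "\<dots> = (\<Sum>b\<in>B. \<Sum>a\<in>A. if E b a then 1 else 0)"
    by (subst sum.swap) (simp add: E_comm)
  also have "\<dots> = (\<Sum>b\<in>B. degree_in A E b)"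
    using assms by (simp add: degree_in_def nbhd_def sum.If_cases Int_def)
  finally show ?thesis .
qed

lemma degree_in_Un:
  assumes "finite A" and "finite B" and "A \<inter> B = {}"
  shows "degree_in (A \<union> B) E w = degree_in A E w + degree_in B E w"
proof -
  have "nbhd (A \<union> B) E w = nbhd A E w \<union> nbhd B E w" unfolding nbhd_def by auto
  moreover have "nbhd A E w \<inter> nbhd B E w = {}" using assms(3) unfolding nbhd_def by auto
  ultimately show ?thesis
    unfolding degree_in_def using assms by (simp add: nbhd_def card_Un_disjoint)
qed

lemma dominating_emptyD: "dominating W E {} \<Longrightarrow> W = {}"
  unfolding dominating_def by auto

lemma dominating_insert_remainder:
  assumes "v \<in> W" and "dominating (W - insert v (nbhd W E v)) E D"
  shows "dominating W E (insert v D)"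
  using assms unfolding dominating_def nbhd_def by auto

lemma dominating_card_ge_remainder:
  assumes "v \<in> W" and "\<forall>D. dominating W E D \<longrightarrow> Suc g \<le> card D"
  shows "\<forall>D. dominating (W - insert v (nbhd W E v)) E D \<longrightarrow> g \<le> card D"
proof (intro allI impI)
  fix D assume "dominating (W - insert v (nbhd W E v)) E D"
  then have "Suc g \<le> card (insert v D)"
    using assms(2) dominating_insert_remainder[OF assms(1)] by blast
  also have "\<dots> \<le> Suc (card D)"
    by (cases "finite D") (auto simp: card_insert_if)
  finally show "g \<le> card D" by simp
qed

text \<open>\<open>{v, u}\<close> together with the vertices of \<open>U\<close> not adjacent to \<open>u\<close> dominates \<open>W\<close>.\<close>

lemma degree_in_remainder_le:
  assumes "finite W" and "v \<in> W" and "u \<in> W"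
    and "\<forall>D. dominating W E D \<longrightarrow> Suc g \<le> card D"
  defines "U \<equiv> W - insert v (nbhd W E v)"
  shows "degree_in U E u + g \<le> card U + 1"
proof -
  have fin: "finite (nbhd U E u)" "nbhd U E u \<subseteq> U"
    using assms(1) unfolding U_def nbhd_def by auto
  have "dominating W E ({v, u} \<union> (U - nbhd U E u))"
    using assms(2,3) unfolding U_def dominating_def nbhd_def by auto
  then have "Suc g \<le> card ({v, u} \<union> (U - nbhd U E u))" using assms(4) by blast
  also have "\<dots> \<le> card {v, u} + card (U - nbhd U E u)" by (rule card_Un_le)
  also have "\<dots> \<le> 2 + (card U - degree_in U E u)"
    using fin unfolding degree_in_def by (simp add: card_Diff_subset card_insert_if)
  moreover have "degree_in U E u \<le> card U"
    using card_mono[OF _ fin(2)] assms(1) unfolding U_def degree_in_def by simp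
  ultimately show ?thesis by linarith
qed

lemma degree_sum_le_no_dominating_vertex:
  assumes "finite W" and "irreflp E" and "\<forall>D. dominating W E D \<longrightarrow> 2 \<le> card D"
  shows "(\<Sum>w\<in>W. degree_in W E w) \<le> (card W - 2) * (card W - 2 + 2)"
proof -
  have deg: "degree_in W E w \<le> card W - 2" if w: "w \<in> W" for w
  proof -
    have "\<not> dominating W E {w}" using assms(3) by force
    then obtain x where x: "x \<in> W" "x \<noteq> w" "\<not> E w x"
      using w unfolding dominating_def by auto
    have "nbhd W E w \<subseteq> W - {w, x}"
      using x assms(2) unfolding nbhd_def by (auto dest: irreflpD)
    then have "degree_in W E w \<le> card (W - {w, x})"
      unfolding degree_in_def using assms(1) by (simp add: card_mono)
    also have "\<dots> = card W - 2" using x w assms(1) by (simp add: card_Diff_subset)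
    finally show ?thesis .
  qed
  have "(\<Sum>w\<in>W. degree_in W E w) \<le> card W * (card W - 2)"
    using sum_bounded_above[of W "degree_in W E" "card W - 2"] deg by auto
  also have "\<dots> \<le> (card W - 2) * (card W - 2 + 2)"
  proof (cases "card W \<ge> 2")
    case True
    then have "card W - 2 + 2 = card W" by simp
    then show ?thesis by (simp add: mult.commute)
  qed simp
  finally show ?thesis .
qed

lemma degree_sum_remainder:
  assumes "finite W" and "symp E" and "v \<in> W"
  defines "U \<equiv> W - insert v (nbhd W E v)"
  shows "(\<Sum>w\<in>U. degree_in W E w)
           = (\<Sum>w\<in>U. degree_in U E w) + (\<Sum>u\<in>nbhd W E v. degree_in U E u)"
proof -
  have fin: "finite U" "finite (nbhd W E v)"
    using assms(1) unfolding U_def nbhd_def by auto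
  have "degree_in W E w = degree_in U E w + degree_in (nbhd W E v) E w" if "w \<in> U" for w
  proof -
    have "nbhd W E w = nbhd (U \<union> nbhd W E v) E w"
      using that assms(2) unfolding U_def nbhd_def by (auto dest: sympD)
    then show ?thesis
      using degree_in_Un[OF fin] unfolding U_def degree_in_def by (auto simp: nbhd_def)
  qed
  then show ?thesis using degree_sum_swap[OF assms(2) fin] by (simp add: sum.distrib)
qed

lemma degree_sum_le_Vizing_step:
  assumes fin: "finite W" and sym: "symp E" and irr: "irreflp E"
    and dom: "\<forall>D. dominating W E D \<longrightarrow> Suc g \<le> card D"
    and IH: "\<And>U. finite U \<Longrightarrow> \<forall>D. dominating U E D \<longrightarrow> g \<le> card D \<Longrightarrow>
               (\<Sum>w\<in>U. degree_in U E w) \<le> (card U - g) * (card U - g + 2)"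
  shows "(\<Sum>w\<in>W. degree_in W E w) \<le> (card W - Suc g) * (card W - Suc g + 2)"
proof -
  have "W \<noteq> {}"
  proof
    assume "W = {}"
    then have "dominating W E {}" by (simp add: dominating_def)
    with dom show False by force
  qed
  have "Max (degree_in W E ` W) \<in> degree_in W E ` W" using fin \<open>W \<noteq> {}\<close> by simp
  then obtain v where v: "v \<in> W" and v_max: "degree_in W E v = Max (degree_in W E ` W)"
    by (metis imageE)
  have max: "degree_in W E w \<le> degree_in W E v" if "w \<in> W" for w
    unfolding v_max using fin that by simp
  define \<Delta> where "\<Delta> = degree_in W E v"
  define N where "N = nbhd W E v"
  define U where "U = W - insert v N"
  have finN: "finite N" "finite U" "card N = \<Delta>" "v \<notin> N"
    using fin irr unfolding N_def U_def \<Delta>_def degree_in_def nbhd_def by (auto dest: irreflpD)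
  have W_eq: "W = insert v N \<union> U" "insert v N \<inter> U = {}"
    using v unfolding U_def N_def nbhd_def by auto
  have domU: "\<forall>D. dominating U E D \<longrightarrow> g \<le> card D"
    using dominating_card_ge_remainder[OF v dom] unfolding U_def N_def .
  then have "g \<le> card U" by (simp add: dominating_def)
  then obtain p where p: "card U = g + p" using le_Suc_ex by blast
  have cW: "card W = Suc \<Delta> + card U"
    using W_eq finN by (simp add: card_Un_disjoint)
  have nbr_bound: "degree_in U E u \<le> p + 1" if "u \<in> N" for u
    using degree_in_remainder_le[OF fin v _ dom, of u] that p
    unfolding U_def N_def nbhd_def by auto
  have "(\<Sum>w\<in>insert v N. degree_in W E w) \<le> card (insert v N) * \<Delta>"
    using sum_bounded_above[of "insert v N" "degree_in W E" \<Delta>] max W_eq \<Delta>_def by auto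
  also have "\<dots> = Suc \<Delta> * \<Delta>" using finN by simp
  finally have sum_N: "(\<Sum>w\<in>insert v N. degree_in W E w) \<le> Suc \<Delta> * \<Delta>" .
  have "(\<Sum>w\<in>U. degree_in W E w) = (\<Sum>w\<in>U. degree_in U E w) + (\<Sum>u\<in>N. degree_in U E u)"
    using degree_sum_remainder[OF fin sym v] unfolding U_def N_def .
  also have "\<dots> \<le> p * (p + 2) + \<Delta> * (p + 1)"
    using IH[OF finN(2) domU] p sum_bounded_above[of N "degree_in U E" "p + 1"] nbr_bound finN
    by (intro add_mono) auto
  finally have sum_U: "(\<Sum>w\<in>U. degree_in W E w) \<le> p * (p + 2) + \<Delta> * (p + 1)" .
  have "(\<Sum>w\<in>W. degree_in W E w) \<le> Suc \<Delta> * \<Delta> + (p * (p + 2) + \<Delta> * (p + 1))"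
    using sum_N sum_U W_eq finN by (simp add: sum.union_disjoint)
  also have "\<dots> \<le> (p + \<Delta>) * (p + \<Delta> + 2)" by (simp add: algebra_simps)
  also have "p + \<Delta> = card W - Suc g" using cW p by simp
  finally show ?thesis .
qed

theorem degree_sum_le_Vizing:
  assumes "2 \<le> g" and "finite W" and "symp E" and "irreflp E"
    and "\<forall>D. dominating W E D \<longrightarrow> g \<le> card D"
  shows "(\<Sum>w\<in>W. degree_in W E w) \<le> (card W - g) * (card W - g + 2)"
  using assms
proof (induction g arbitrary: W rule: nat_induct_at_least)
  case base
  then show ?case using degree_sum_le_no_dominating_vertex by blast
next
  case (Suc g)
  then show ?case using degree_sum_le_Vizing_step[of W E g] by blast
qed

corollary num_edges_le_Vizing:
  assumes "simple_graph V E" and "2 \<le> g" and "\<forall>D. dominating V E D \<longrightarrow> g \<le> card D"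
  shows "2 * num_edges V E \<le> (card V - g) * (card V - g + 2)"
  using two_num_edges_eq_degree_sum[OF assms(1)] degree_sum_le_Vizing[OF assms(2) _ _ _ assms(3)]
    simple_graphD[OF assms(1)] by simp

lemma finite_tropical_dominating_cards:
  assumes "finite V"
  shows "finite {card D | D. dominating V E D \<and> tropical col c D}"
proof -
  have "{card D | D. dominating V E D \<and> tropical col c D} \<subseteq> card ` Pow V"
    unfolding dominating_def by auto
  then show ?thesis using assms by (meson finite_Pow_iff finite_imageI rev_finite_subset)
qed

lemma trop_dom_number_le:
  assumes "finite V" and "dominating V E D" and "tropical col c D"
  shows "trop_dom_number V E col c \<le> card D"
  unfolding trop_dom_number_def using assms finite_tropical_dominating_cards[OF assms(1)]
  by (intro Min_le) auto

lemma trop_dom_number_eqI: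
  assumes "finite V" and "dominating V E D" and "tropical col c D" and "card D = k"
    and "\<And>D. dominating V E D \<Longrightarrow> tropical col c D \<Longrightarrow> k \<le> card D"
  shows "trop_dom_number V E col c = k"
  unfolding trop_dom_number_def using assms finite_tropical_dominating_cards[OF assms(1)]
  by (intro Min_eqI) auto

lemma tropical_extension:
  assumes "vertex_coloured V col c" and "dominating V E D" and "D \<noteq> {}"
  shows "\<exists>D'. dominating V E D' \<and> tropical col c D' \<and> card D' \<le> card D + (c - 1)"
proof -
  have DV: "D \<subseteq> V" using assms(2) unfolding dominating_def by auto
  obtain d where d: "d \<in> D" using assms(3) by auto
  then have col_d: "col d \<in> {1..c}" using DV assms(1) unfolding vertex_coloured_def by blast
  have "\<forall>j\<in>{1..c} - col ` D. \<exists>x\<in>V. col x = j"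
    using assms(1) unfolding vertex_coloured_def by (metis DiffD1 imageE)
  then obtain f where f: "\<And>j. j \<in> {1..c} - col ` D \<Longrightarrow> f j \<in> V \<and> col (f j) = j"
    by metis
  define D' where "D' = D \<union> f ` ({1..c} - col ` D)"
  have "dominating V E D'"
    using assms(2) f unfolding D'_def dominating_def by blast
  moreover have "tropical col c D'"
  proof -
    have "j \<in> col ` D'" if "j \<in> {1..c}" for j
    proof (cases "j \<in> col ` D")
      case False
      then show ?thesis using f[of j] that unfolding D'_def by (metis DiffI UnI2 image_eqI)
    qed (auto simp: D'_def)
    then show ?thesis unfolding tropical_def by blast
  qed
  moreover have "card D' \<le> card D + (c - 1)"
  proof -
    have "card D' \<le> card D + card (f ` ({1..c} - col ` D))"
      unfolding D'_def by (rule card_Un_le)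
    also have "card (f ` ({1..c} - col ` D)) \<le> card ({1..c} - col ` D)"
      by (rule card_image_le) simp
    also have "card ({1..c} - col ` D) \<le> card ({1..c} - {col d})"
      using d by (intro card_mono) auto
    also have "\<dots> = c - 1" using col_d by simp
    finally show ?thesis by simp
  qed
  ultimately show ?thesis by blast
qed

lemma two_mul_choose_two: "2 * (x choose 2) = x * (x - 1)"
proof -
  have "even (x * (x - 1))" by (cases "even x") auto
  then show ?thesis by (simp add: choose_two)
qed

theorem trop_dom_number_le_if_many_edges:
  assumes sg: "simple_graph V E" and vc: "vertex_coloured V col c" and "1 \<le> c"
    and n: "card V = n" and "k + c \<le> n + 1"
    and many: "(n - k + c - 1 choose 2) + (n - k) \<le> num_edges V E"
  shows "trop_dom_number V E col c \<le> k"
proof (rule ccontr)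
  assume "\<not> ?thesis"
  then have big: "k < card D" if "dominating V E D" and "tropical col c D" for D
    using trop_dom_number_le[OF simple_graphD(1)[OF sg] that] by linarith
  have "V \<noteq> {}" using vc \<open>1 \<le> c\<close> unfolding vertex_coloured_def by auto
  have "dominating V E V" and "tropical col c V"
    using vc unfolding dominating_def tropical_def vertex_coloured_def by auto
  then have "k < n" using big n by blast
  show False
  proof (cases "k < c")
    case True
    then have "n choose 2 \<le> (n - k + c - 1) choose 2" by (intro binomial_right_mono) linarith
    then show False using many \<open>k < n\<close> num_edges_le_choose_two[OF sg, unfolded n] by linarith
  next
    case False
    define g where "g = k + 2 - c"
    have dom_g: "g \<le> card D" if D: "dominating V E D" for D
    proof -
      have "D \<noteq> {}" using D \<open>V \<noteq> {}\<close> dominating_emptyD by blast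
      then obtain D' where D': "dominating V E D'" "tropical col c D'"
        and card_D': "card D' \<le> card D + (c - 1)"
        using tropical_extension[OF vc D] by blast
      from D' have "k < card D'" by (rule big)
      with card_D' \<open>1 \<le> c\<close> show ?thesis unfolding g_def by linarith
    qed
    define x where "x = n - g"
    have upper: "2 * num_edges V E \<le> x * (x + 2)"
      using num_edges_le_Vizing[OF sg _ allI[OF impI[OF dom_g]]] False n
      unfolding x_def g_def by auto
    have "n - k + c - 1 = x + 1"
      using \<open>k < n\<close> False \<open>1 \<le> c\<close> unfolding x_def g_def by linarith
    then have lower: "(x + 1) * x + 2 * (n - k) \<le> 2 * num_edges V E"
      using many two_mul_choose_two[of "x + 1"] by simp
    from upper lower have "2 * (n - k) \<le> x" by (simp add: algebra_simps)
    then show False using \<open>k + c \<le> n + 1\<close> \<open>k < n\<close> unfolding x_def g_def by linarith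
  qed
qed

text \<open>
  The extremal graph on \<open>{0..<n}\<close>: a clique on \<open>{0..<s}\<close> whose vertices \<open>0, \<dots>, c - 2\<close>
  carry the colours \<open>2, \<dots>, c\<close>, a vertex \<open>s\<close> joined to the remaining clique vertices,
  and isolated vertices \<open>s + 1, \<dots>, n - 1\<close>; all vertices from \<open>c - 1\<close> on have colour 1.
  A tropical dominating set must contain the uniquely coloured and the isolated vertices and
  one vertex of \<open>{c - 1..s}\<close> to dominate \<open>s\<close>.
\<close>

definition extremal_edge :: "nat \<Rightarrow> nat \<Rightarrow> nat \<Rightarrow> nat \<Rightarrow> bool" where
  "extremal_edge c s u v \<longleftrightarrow> (u < s \<and> v < s \<and> u \<noteq> v)
     \<or> (u = s \<and> c - 1 \<le> v \<and> v < s) \<or> (v = s \<and> c - 1 \<le> u \<and> u < s)"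

definition extremal_colour :: "nat \<Rightarrow> nat \<Rightarrow> nat" where
  "extremal_colour c i = (if i < c - 1 then i + 2 else 1)"

lemma extremal_simple_graph:
  assumes "s < n"
  shows "simple_graph {0..<n} (extremal_edge c s)"
  using assms unfolding simple_graph_def extremal_edge_def by auto

lemma extremal_vertex_coloured:
  assumes "1 \<le> c" and "c - 1 \<le> s" and "s < n"
  shows "vertex_coloured {0..<n} (extremal_colour c) c"
  unfolding vertex_coloured_def
proof
  show "extremal_colour c ` {0..<n} \<subseteq> {1..c}"
    unfolding extremal_colour_def using assms(1) by auto
  show "{1..c} \<subseteq> extremal_colour c ` {0..<n}"
  proof
    fix j assume j: "j \<in> {1..c}"
    show "j \<in> extremal_colour c ` {0..<n}"
    proof (cases "j = 1")
      case True
      then have "extremal_colour c s = j" unfolding extremal_colour_def using assms by auto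
      then show ?thesis using assms by force
    next
      case False
      then have "extremal_colour c (j - 2) = j" "j - 2 \<in> {0..<n}"
        unfolding extremal_colour_def using j assms by auto
      then show ?thesis by (metis image_eqI)
    qed
  qed
qed

lemma extremal_edges:
  assumes "s < n"
  shows "edges {0..<n} (extremal_edge c s)
           = {B. B \<subseteq> {0..<s} \<and> card B = 2} \<union> (\<lambda>q. {s, q}) ` {c - 1..<s}"
proof (intro equalityI subsetI)
  fix B assume "B \<in> edges {0..<n} (extremal_edge c s)"
  then obtain u v where B: "B = {u, v}" and uv: "extremal_edge c s u v"
    unfolding edges_def by auto
  from uv consider "u < s" "v < s" "u \<noteq> v" | "u = s" "c - 1 \<le> v" "v < s"
    | "v = s" "c - 1 \<le> u" "u < s"
    unfolding extremal_edge_def by blast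
  then show "B \<in> {B. B \<subseteq> {0..<s} \<and> card B = 2} \<union> (\<lambda>q. {s, q}) ` {c - 1..<s}"
    by cases (auto simp: B insert_commute)
next
  fix B assume "B \<in> {B. B \<subseteq> {0..<s} \<and> card B = 2} \<union> (\<lambda>q. {s, q}) ` {c - 1..<s}"
  then consider "B \<subseteq> {0..<s}" "card B = 2" | q where "B = {s, q}" "c - 1 \<le> q" "q < s"
    by auto
  then show "B \<in> edges {0..<n} (extremal_edge c s)"
  proof cases
    case 1
    then obtain u v where "B = {u, v}" "u \<noteq> v" "u < s" "v < s" by (auto simp: card_2_iff)
    then show ?thesis unfolding edges_def extremal_edge_def using assms by force
  next
    case 2
    then show ?thesis unfolding edges_def extremal_edge_def using assms by force
  qed
qed

lemma extremal_num_edges: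
  assumes "s < n"
  shows "num_edges {0..<n} (extremal_edge c s) = (s choose 2) + (s - (c - 1))"
proof -
  have "inj_on (\<lambda>q. {s, q}) {c - 1..<s}" by (auto simp: inj_on_def doubleton_eq_iff)
  then have "card ((\<lambda>q. {s, q}) ` {c - 1..<s}) = s - (c - 1)" by (simp add: card_image)
  moreover have "card {B. B \<subseteq> {0..<s} \<and> card B = 2} = s choose 2"
    using n_subsets[of "{0..<s}" 2] by simp
  moreover have "{B. B \<subseteq> {0..<s} \<and> card B = 2} \<inter> (\<lambda>q. {s, q}) ` {c - 1..<s} = {}" by auto
  ultimately show ?thesis
    unfolding num_edges_def extremal_edges[OF assms] by (simp add: card_Un_disjoint)
qed

lemma card_insert_Un_intervals:
  assumes "1 \<le> c" and "c - 1 \<le> z" and "z \<le> s"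
  shows "card (insert z {0..<c - 1} \<union> {Suc s..<n}) = c + (n - Suc s)"
proof -
  have "insert z {0..<c - 1} \<inter> {Suc s..<n} = {}" using assms by auto
  then have "card (insert z {0..<c - 1} \<union> {Suc s..<n})
               = card (insert z {0..<c - 1}) + card {Suc s..<n}"
    by (intro card_Un_disjoint) auto
  also have "card (insert z {0..<c - 1}) = c" using assms by simp
  finally show ?thesis by simp
qed

lemma extremal_optimal_set:
  assumes "1 \<le> c" and "c - 1 \<le> s" and "s < n"
  defines "D \<equiv> insert s {0..<c - 1} \<union> {Suc s..<n}"
  shows "dominating {0..<n} (extremal_edge c s) D" and "tropical (extremal_colour c) c D"
    and "card D = c + (n - Suc s)"
proof -
  show "dominating {0..<n} (extremal_edge c s) D"
    unfolding dominating_def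
  proof (intro conjI ballI)
    show "D \<subseteq> {0..<n}" unfolding D_def using assms by auto
    fix v assume v: "v \<in> {0..<n}"
    show "v \<in> D \<or> (\<exists>u\<in>D. extremal_edge c s u v)"
    proof (cases "v < c - 1 \<or> s \<le> v")
      case True
      then show ?thesis using v unfolding D_def by auto
    next
      case False
      then have "extremal_edge c s s v" unfolding extremal_edge_def by auto
      then show ?thesis unfolding D_def by blast
    qed
  qed
  show "tropical (extremal_colour c) c D"
    unfolding tropical_def
  proof
    fix j assume j: "j \<in> {1..c}"
    show "j \<in> extremal_colour c ` D"
    proof (cases "j = 1")
      case True
      then have "extremal_colour c s = j" unfolding extremal_colour_def using assms by auto
      then show ?thesis unfolding D_def by blast
    next
      case False
      then have "extremal_colour c (j - 2) = j" "j - 2 \<in> D"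
        unfolding extremal_colour_def D_def using j by auto
      then show ?thesis by (metis image_eqI)
    qed
  qed
  show "card D = c + (n - Suc s)"
    unfolding D_def using assms by (intro card_insert_Un_intervals) auto
qed

lemma extremal_tropical_dominating_card_ge:
  assumes "1 \<le> c" and "c - 1 \<le> s" and "s < n"
    and dom: "dominating {0..<n} (extremal_edge c s) D" and trop: "tropical (extremal_colour c) c D"
  shows "c + (n - Suc s) \<le> card D"
proof -
  have uniquely_coloured: "{0..<c - 1} \<subseteq> D"
  proof
    fix i assume "i \<in> {0..<c - 1}"
    then have "i + 2 \<in> extremal_colour c ` D" using trop unfolding tropical_def by auto
    then obtain d where "d \<in> D" "i + 2 = extremal_colour c d" by blast
    then show "i \<in> D" unfolding extremal_colour_def by (auto split: if_splits)
  qed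
  have isolated: "{Suc s..<n} \<subseteq> D"
  proof
    fix i assume i: "i \<in> {Suc s..<n}"
    then have "i \<in> D \<or> (\<exists>u\<in>D. extremal_edge c s u i)" using dom unfolding dominating_def by auto
    moreover have "\<not> extremal_edge c s u i" for u using i unfolding extremal_edge_def by auto
    ultimately show "i \<in> D" by blast
  qed
  have "s \<in> D \<or> (\<exists>u\<in>D. extremal_edge c s u s)" using dom assms(3) unfolding dominating_def by auto
  then obtain z where z: "z \<in> D" "c - 1 \<le> z" "z \<le> s"
    using assms(2) unfolding extremal_edge_def by auto
  have "insert z {0..<c - 1} \<union> {Suc s..<n} \<subseteq> D"
    using uniquely_coloured isolated z by auto
  moreover have "finite D" using dom finite_subset unfolding dominating_def by blast
  ultimately have "card (insert z {0..<c - 1} \<union> {Suc s..<n}) \<le> card D"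
    by (rule card_mono[rotated])
  then show ?thesis using card_insert_Un_intervals[OF assms(1) z(2,3)] by simp
qed

lemma extremal_trop_dom_number:
  assumes "1 \<le> c" and "c - 1 \<le> s" and "s < n"
  shows "trop_dom_number {0..<n} (extremal_edge c s) (extremal_colour c) c = c + (n - Suc s)"
  using extremal_optimal_set[OF assms] extremal_tropical_dominating_card_ge[OF assms]
  by (intro trop_dom_number_eqI) auto

theorem mainTheorem3:
  fixes n c k :: nat
  assumes "k > 0" and "c \<ge> 1"
  shows "(\<forall>(V :: 'a set) E col.
            simple_graph V E \<and> vertex_coloured V col c \<and> card V = n
            \<and> num_edges V E \<ge> ((n - k + c - 1) choose 2) + (n - k)
            \<and> int n > int k + int c - 2
            \<longrightarrow> trop_dom_number V E col c \<le> k)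
       \<and> (k \<ge> c \<and> int n > int k + int c - 2 \<longrightarrow>
            (\<exists>(V :: nat set) E col.
               simple_graph V E \<and> vertex_coloured V col c \<and> card V = n
               \<and> num_edges V E = ((n - k + c - 1) choose 2) + (n - k)
               \<and> trop_dom_number V E col c = k))"
proof (intro conjI allI impI)
  fix V :: "'a set" and E col
  assume G: "simple_graph V E \<and> vertex_coloured V col c \<and> card V = n
    \<and> num_edges V E \<ge> ((n - k + c - 1) choose 2) + (n - k) \<and> int n > int k + int c - 2"
  then have "k + c \<le> n + 1" by linarith
  with G assms(2) show "trop_dom_number V E col c \<le> k"
    by (intro trop_dom_number_le_if_many_edges) auto
next
  assume "k \<ge> c \<and> int n > int k + int c - 2"
  then have "c \<le> k" and "k + c \<le> n + 1" by linarith+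
  define s where "s = n - k + c - 1"
  have s: "1 \<le> c" "c - 1 \<le> s" "s < n" "s - (c - 1) = n - k" "c + (n - Suc s) = k"
    using assms(2) \<open>c \<le> k\<close> \<open>k + c \<le> n + 1\<close> unfolding s_def by linarith+
  show "\<exists>(V :: nat set) E col. simple_graph V E \<and> vertex_coloured V col c \<and> card V = n
          \<and> num_edges V E = ((n - k + c - 1) choose 2) + (n - k)
          \<and> trop_dom_number V E col c = k"
  proof (intro exI conjI)
    show "simple_graph {0..<n} (extremal_edge c s)" using s(3) by (rule extremal_simple_graph)
    show "vertex_coloured {0..<n} (extremal_colour c) c" using s(1-3) by (rule extremal_vertex_coloured)
    show "card {0..<n} = n" by simp
    show "num_edges {0..<n} (extremal_edge c s) = ((n - k + c - 1) choose 2) + (n - k)"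
      using extremal_num_edges[OF s(3)] s(4) unfolding s_def by simp
    show "trop_dom_number {0..<n} (extremal_edge c s) (extremal_colour c) c = k"
      using extremal_trop_dom_number[OF s(1-3)] s(5) by simp
  qed
qed

end
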